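(* Let $G$ be a locally Hausdorff, locally compact groupoid such that $G^{(0)}$ is paracompact. Then $G$ has a fundamental system of diagonally compact neighborhoods of $G^{(0)}$: for every neighborhood $V$ of $G^{(0)}$ in $G$ there is a diagonally compact neighborhood $U$ of $G^{(0)}$ with $U\subset V$.
   Context: A locally Hausdorff, locally compact groupoid: groupoid operations continuous, $G^{(0)}$ Hausdorff, each point has a compact Hausdorff neighborhood, range map open. "Compact" means the finite-subcover property (not necessarily Hausdorff). A subset $U\subset G$ is diagonally compact if $UW=\{\alpha\beta:\alpha\in U,\beta\in W, s(\alpha)=r(\beta)\}$ and $WU$ are compact whenever $W\subset G$ is compact. *)

theory Defs
  imports "HOL-Analysis.Analysis"
begin

text \<open>A (possibly non-Hausdorff) groupoid whose underlying set is the carrier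
  topspace X.  G0 is the unit space, r and s the range and source maps,
  iv the inversion and m the (partial) multiplication, meaningful on the
  composable pairs (a,b) with s a = r b.\<close>

definition composable :: "'a topology \<Rightarrow> ('a \<Rightarrow> 'a) \<Rightarrow> ('a \<Rightarrow> 'a) \<Rightarrow> ('a \<times> 'a) set" where
  "composable X r s = {(a,b). a \<in> topspace X \<and> b \<in> topspace X \<and> s a = r b}"

definition groupoid_on ::
  "'a topology \<Rightarrow> 'a set \<Rightarrow> ('a \<Rightarrow> 'a) \<Rightarrow> ('a \<Rightarrow> 'a) \<Rightarrow> ('a \<Rightarrow> 'a) \<Rightarrow> ('a \<Rightarrow> 'a \<Rightarrow> 'a) \<Rightarrow> bool" where
  "groupoid_on X G0 r s iv m \<longleftrightarrow>
     G0 \<subseteq> topspace X \<and>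
     (\<forall>a\<in>topspace X. r a \<in> G0 \<and> s a \<in> G0 \<and> iv a \<in> topspace X) \<and>
     (\<forall>u\<in>G0. r u = u \<and> s u = u) \<and>
     (\<forall>(a,b)\<in>composable X r s. m a b \<in> topspace X \<and> r (m a b) = r a \<and> s (m a b) = s b) \<and>
     (\<forall>a\<in>topspace X. \<forall>b\<in>topspace X. \<forall>c\<in>topspace X.
        s a = r b \<longrightarrow> s b = r c \<longrightarrow> m (m a b) c = m a (m b c)) \<and>
     (\<forall>a\<in>topspace X. m (r a) a = a \<and> m a (s a) = a) \<and>
     (\<forall>a\<in>topspace X. r (iv a) = s a \<and> s (iv a) = r a \<and>
        m (iv a) a = s a \<and> m a (iv a) = r a)"

definition lhlc_groupoid ::
  "'a topology \<Rightarrow> 'a set \<Rightarrow> ('a \<Rightarrow> 'a) \<Rightarrow> ('a \<Rightarrow> 'a) \<Rightarrow> ('a \<Rightarrow> 'a) \<Rightarrow> ('a \<Rightarrow> 'a \<Rightarrow> 'a) \<Rightarrow> bool" where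
  "lhlc_groupoid X G0 r s iv m \<longleftrightarrow>
     groupoid_on X G0 r s iv m \<and>
     continuous_map X X r \<and> continuous_map X X s \<and> continuous_map X X iv \<and>
     continuous_map (subtopology (prod_topology X X) (composable X r s)) X (\<lambda>(a,b). m a b) \<and>
     Hausdorff_space (subtopology X G0) \<and>
     (\<forall>x\<in>topspace X. \<exists>K. compactin X K \<and> Hausdorff_space (subtopology X K) \<and>
        x \<in> X interior_of K) \<and>
     open_map X (subtopology X G0) r"

definition paracompact_space :: "'a topology \<Rightarrow> bool" where
  "paracompact_space X \<longleftrightarrow> Hausdorff_space X \<and>
     (\<forall>\<U>. (\<forall>U\<in>\<U>. openin X U) \<and> topspace X \<subseteq> \<Union>\<U> \<longrightarrow>
       (\<exists>\<V>. (\<forall>V\<in>\<V>. openin X V) \<and> topspace X \<subseteq> \<Union>\<V> \<and>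
             (\<forall>V\<in>\<V>. \<exists>U\<in>\<U>. V \<subseteq> U) \<and>
             (\<forall>x\<in>topspace X. \<exists>N. openin X N \<and> x \<in> N \<and>
                finite {V\<in>\<V>. V \<inter> N \<noteq> {}})))"

definition setprod :: "('a \<Rightarrow> 'a) \<Rightarrow> ('a \<Rightarrow> 'a) \<Rightarrow> ('a \<Rightarrow> 'a \<Rightarrow> 'a) \<Rightarrow> 'a set \<Rightarrow> 'a set \<Rightarrow> 'a set" where
  "setprod r s m U W = {m a b | a b. a \<in> U \<and> b \<in> W \<and> s a = r b}"

definition diagonally_compact ::
  "'a topology \<Rightarrow> ('a \<Rightarrow> 'a) \<Rightarrow> ('a \<Rightarrow> 'a) \<Rightarrow> ('a \<Rightarrow> 'a \<Rightarrow> 'a) \<Rightarrow> 'a set \<Rightarrow> bool" where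
  "diagonally_compact X r s m U \<longleftrightarrow>
     (\<forall>W. compactin X W \<longrightarrow>
        compactin X (setprod r s m U W) \<and> compactin X (setprod r s m W U))"

end

theory Submission
  imports Defs
begin

(* Call a set U of arrows r-proper (s-proper) if U meets the preimage under r (s)
   of every compact set of units in a compact set.  If U is both, then U is diagonally
   compact: for compact W, UW is the product of the compact set U \<inter> s\<^sup>-\<^sup>1(r W) with W, and
   products of compact sets are compact because the composable pairs form a closed set
   (G0 is Hausdorff) on which multiplication is continuous.
   To build such a U inside V, choose around every unit a compact neighbourhood inside the
   interior of V, refine the resulting open cover of G0 to a locally finite open cover \<V>
   (paracompactness), and attach to W \<in> \<V> the compact set K W of arrows of the chosen
   neighbourhood whose range and source lie in the closure of W.  The union U of the K W is
   a neighbourhood of G0 contained in V, and it is r- and s-proper since a compact set of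
   units meets the closures of only finitely many members of a locally finite family. *)

definition proper_set :: "'a topology \<Rightarrow> 'b topology \<Rightarrow> ('a \<Rightarrow> 'b) \<Rightarrow> 'a set \<Rightarrow> bool" where
  "proper_set X Y f U \<longleftrightarrow>
     (\<forall>L. compactin Y L \<longrightarrow> compactin X (U \<inter> {a \<in> topspace X. f a \<in> L}))"

lemma compact_neighbourhood_in_open:
  assumes lc: "\<forall>x\<in>topspace X. \<exists>K. compactin X K \<and> Hausdorff_space (subtopology X K) \<and>
        x \<in> X interior_of K"
    and Op: "openin X Op" and u: "u \<in> Op"
  obtains C where "compactin X C" "u \<in> X interior_of C" "C \<subseteq> Op"
proof -
  have "u \<in> topspace X" using Op u openin_subset by blast
  then obtain K where K: "compactin X K" "Hausdorff_space (subtopology X K)" "u \<in> X interior_of K"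
    using lc by blast
  define Y where "Y = subtopology X K"
  have "compact_space Y" using K(1) compactin_subspace unfolding Y_def by blast
  hence "regular_space Y" using K(2) compact_Hausdorff_imp_regular_space unfolding Y_def by blast
  hence base: "neighbourhood_base_of (closedin Y) Y" using neighbourhood_base_of_closedin by blast
  define W where "W = Op \<inter> X interior_of K"
  have WK: "W \<subseteq> K" unfolding W_def using interior_of_subset[of X K] by blast
  have "openin X W" unfolding W_def using Op by (simp add: openin_Int)
  hence "openin Y W" unfolding Y_def using openin_subtopology_Int[of X W K] WK
    by (simp add: Int_absorb2)
  moreover have "u \<in> W" using u K(3) W_def by blast
  ultimately obtain N D where ND: "openin Y N" "closedin Y D" "u \<in> N" "N \<subseteq> D" "D \<subseteq> W"
    using base unfolding neighbourhood_base_of by meson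
  have "compactin Y K" unfolding Y_def compactin_subtopology using K(1) by blast
  hence "compactin Y D" using ND(2,5) WK closed_compactin by blast
  hence D: "compactin X D" unfolding Y_def compactin_subtopology by blast
  obtain N' where N': "openin X N'" "N = N' \<inter> K" using ND(1) unfolding Y_def openin_subtopology by blast
  have "N = N' \<inter> X interior_of K"
    using N'(2) ND(4,5) interior_of_subset[of X K] unfolding W_def by blast
  hence "openin X N" using N'(1) by (simp add: openin_Int)
  hence "N \<subseteq> X interior_of D" using ND(4) by (simp add: interior_of_maximal)
  with D ND(3,5) W_def that show ?thesis by blast
qed

lemma locally_finite_closures_meeting_compact:
  assumes lf: "\<forall>x\<in>topspace Y. \<exists>N. openin Y N \<and> x \<in> N \<and> finite {V\<in>\<V>. V \<inter> N \<noteq> {}}"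
    and L: "compactin Y L"
  shows "finite {V\<in>\<V>. Y closure_of V \<inter> L \<noteq> {}}"
proof -
  have LY: "L \<subseteq> topspace Y" using L compactin_subset_topspace by blast
  obtain N where N: "\<And>x. x \<in> topspace Y \<Longrightarrow> openin Y (N x) \<and> x \<in> N x \<and> finite {V\<in>\<V>. V \<inter> N x \<noteq> {}}"
    using lf by metis
  have "\<forall>M\<in>N ` L. openin Y M" "L \<subseteq> \<Union>(N ` L)" using N LY by blast+
  then obtain F where F: "finite F" "F \<subseteq> N ` L" "L \<subseteq> \<Union>F"
    using L unfolding compactin_def by meson
  have "{V\<in>\<V>. Y closure_of V \<inter> L \<noteq> {}} \<subseteq> (\<Union>M\<in>F. {V\<in>\<V>. V \<inter> M \<noteq> {}})"
  proof
    fix V assume V: "V \<in> {V\<in>\<V>. Y closure_of V \<inter> L \<noteq> {}}"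
    then obtain y where y: "y \<in> Y closure_of V" "y \<in> L" by blast
    then obtain M where M: "M \<in> F" "y \<in> M" using F(3) by blast
    have "openin Y M" using M(1) F(2) N LY by blast
    hence "M \<inter> V \<noteq> {}" using openin_Int_closure_of_eq_empty[of Y M V] y(1) M(2) by blast
    thus "V \<in> (\<Union>M\<in>F. {V\<in>\<V>. V \<inter> M \<noteq> {}})" using V M(1) by blast
  qed
  moreover have "finite (\<Union>M\<in>F. {V\<in>\<V>. V \<inter> M \<noteq> {}})" using F(1,2) N LY by blast
  ultimately show ?thesis using finite_subset by blast
qed

lemma proper_set_locally_finite_Union:
  assumes H: "Hausdorff_space Y" and f: "continuous_map X Y f"
    and lf: "\<forall>x\<in>topspace Y. \<exists>N. openin Y N \<and> x \<in> N \<and> finite {W\<in>\<V>. W \<inter> N \<noteq> {}}"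
    and K: "\<And>W. W \<in> \<V> \<Longrightarrow> compactin X (K W)"
    and fK: "\<And>W. W \<in> \<V> \<Longrightarrow> f ` K W \<subseteq> Y closure_of W"
  shows "proper_set X Y f (\<Union>(K ` \<V>))"
  unfolding proper_set_def
proof clarify
  fix L assume L: "compactin Y L"
  define P where "P = {a \<in> topspace X. f a \<in> L}"
  define F where "F = {W\<in>\<V>. Y closure_of W \<inter> L \<noteq> {}}"
  have "finite F" unfolding F_def using locally_finite_closures_meeting_compact[OF lf L] .
  moreover have "closedin X P"
    unfolding P_def using closedin_continuous_map_preimage[OF f] L H compactin_imp_closedin by blast
  ultimately have "compactin X (\<Union>W\<in>F. K W \<inter> P)"
    using K compact_Int_closedin unfolding F_def by (intro compactin_Union) auto
  moreover have "\<Union>(K ` \<V>) \<inter> P = (\<Union>W\<in>F. K W \<inter> P)"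
  proof (rule subset_antisym)
    show "\<Union>(K ` \<V>) \<inter> P \<subseteq> (\<Union>W\<in>F. K W \<inter> P)"
    proof
      fix a assume a: "a \<in> \<Union>(K ` \<V>) \<inter> P"
      then obtain W where W: "W \<in> \<V>" "a \<in> K W" by blast
      hence "f a \<in> Y closure_of W" using fK by blast
      with W a have "W \<in> F" unfolding F_def P_def by blast
      with W a show "a \<in> (\<Union>W\<in>F. K W \<inter> P)" by blast
    qed
    show "(\<Union>W\<in>F. K W \<inter> P) \<subseteq> \<Union>(K ` \<V>) \<inter> P" by (auto simp: F_def)
  qed
  ultimately show "compactin X (\<Union>(K ` \<V>) \<inter> P)" by simp
qed

lemma lhlc_units_subset: "lhlc_groupoid X G0 r s iv m \<Longrightarrow> G0 \<subseteq> topspace X"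
  unfolding lhlc_groupoid_def groupoid_on_def by blast

lemma lhlc_range_unit: "lhlc_groupoid X G0 r s iv m \<Longrightarrow> u \<in> G0 \<Longrightarrow> r u = u \<and> s u = u"
  unfolding lhlc_groupoid_def groupoid_on_def by blast

lemma lhlc_units_Hausdorff: "lhlc_groupoid X G0 r s iv m \<Longrightarrow> Hausdorff_space (subtopology X G0)"
  by (simp add: lhlc_groupoid_def)

lemma lhlc_multiplication_continuous:
  "lhlc_groupoid X G0 r s iv m \<Longrightarrow>
     continuous_map (subtopology (prod_topology X X) (composable X r s)) X (\<lambda>(a,b). m a b)"
  by (simp add: lhlc_groupoid_def)

lemma lhlc_locally_compact:
  "lhlc_groupoid X G0 r s iv m \<Longrightarrow>
     \<forall>x\<in>topspace X. \<exists>K. compactin X K \<and> Hausdorff_space (subtopology X K) \<and> x \<in> X interior_of K"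
  by (simp add: lhlc_groupoid_def)

lemma lhlc_range_source_continuous:
  assumes "lhlc_groupoid X G0 r s iv m"
  shows "continuous_map X (subtopology X G0) r" "continuous_map X (subtopology X G0) s"
  using assms unfolding lhlc_groupoid_def groupoid_on_def
  by (auto intro!: continuous_map_into_subtopology)

text \<open>The composable pairs form a closed set: they are the preimage of the diagonal of the
  Hausdorff unit space under (a, b) \<mapsto> (s a, r b).\<close>

lemma composable_closedin:
  assumes r: "continuous_map X (subtopology X G0) r" and s: "continuous_map X (subtopology X G0) s"
    and H: "Hausdorff_space (subtopology X G0)"
  shows "closedin (prod_topology X X) (composable X r s)"
proof -
  define Y where "Y = subtopology X G0"
  have "continuous_map (prod_topology X X) (prod_topology Y Y) (\<lambda>p. (s (fst p), r (snd p)))"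
    using continuous_map_compose[OF continuous_map_fst s] continuous_map_compose[OF continuous_map_snd r]
    by (intro continuous_map_pairedI) (simp_all add: o_def Y_def)
  moreover have "closedin (prod_topology Y Y) ((\<lambda>x. (x,x)) ` topspace Y)"
    using H unfolding Y_def Hausdorff_space_closedin_diagonal .
  ultimately have "closedin (prod_topology X X)
      {p \<in> topspace (prod_topology X X). (s (fst p), r (snd p)) \<in> (\<lambda>x. (x,x)) ` topspace Y}"
    by (rule closedin_continuous_map_preimage)
  moreover have "{p \<in> topspace (prod_topology X X). (s (fst p), r (snd p)) \<in> (\<lambda>x. (x,x)) ` topspace Y}
      = composable X r s"
  proof -
    have "\<And>a. a \<in> topspace X \<Longrightarrow> s a \<in> topspace Y"
      using continuous_map_image_subset_topspace[OF s] unfolding Y_def by blast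
    thus ?thesis unfolding composable_def topspace_prod_topology by (auto simp: image_iff) metis
  qed
  ultimately show ?thesis by simp
qed

lemma setprod_compactin:
  assumes G: "lhlc_groupoid X G0 r s iv m" and A: "compactin X A" and B: "compactin X B"
  shows "compactin X (setprod r s m A B)"
proof -
  have "closedin (prod_topology X X) (composable X r s)"
    using lhlc_range_source_continuous[OF G] lhlc_units_Hausdorff[OF G] by (rule composable_closedin)
  with A B have "compactin (prod_topology X X) ((A \<times> B) \<inter> composable X r s)"
    by (simp add: compactin_Times compact_Int_closedin)
  hence "compactin (subtopology (prod_topology X X) (composable X r s)) ((A \<times> B) \<inter> composable X r s)"
    by (simp add: compactin_subtopology)
  hence "compactin X ((\<lambda>(a,b). m a b) ` ((A \<times> B) \<inter> composable X r s))"
    by (rule image_compactin[OF _ lhlc_multiplication_continuous[OF G]])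
  moreover have "(\<lambda>(a,b). m a b) ` ((A \<times> B) \<inter> composable X r s) = setprod r s m A B"
    using A B compactin_subset_topspace
    unfolding setprod_def composable_def by force
  ultimately show ?thesis by simp
qed

lemma diagonally_compact_if_proper:
  assumes G: "lhlc_groupoid X G0 r s iv m" and UX: "U \<subseteq> topspace X"
    and Ur: "proper_set X (subtopology X G0) r U" and Us: "proper_set X (subtopology X G0) s U"
  shows "diagonally_compact X r s m U"
  unfolding diagonally_compact_def
proof clarify
  fix W assume W: "compactin X W"
  define A where "A = U \<inter> {a\<in>topspace X. s a \<in> r ` W}"
  define B where "B = U \<inter> {a\<in>topspace X. r a \<in> s ` W}"
  have "compactin (subtopology X G0) (r ` W)" "compactin (subtopology X G0) (s ` W)"
    using W image_compactin lhlc_range_source_continuous[OF G] by blast+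
  hence "compactin X A" "compactin X B"
    using Ur Us unfolding A_def B_def proper_set_def by blast+
  moreover have "setprod r s m U W = setprod r s m A W"
    using UX unfolding setprod_def A_def by (fastforce intro: sym)
  moreover have "setprod r s m W U = setprod r s m W B"
    using UX unfolding setprod_def B_def by (fastforce intro: sym)
  ultimately show "compactin X (setprod r s m U W) \<and> compactin X (setprod r s m W U)"
    using setprod_compactin[OF G] W by simp
qed

lemma paracompact_locally_finite_refinement:
  assumes pc: "paracompact_space Y"
    and Nb: "\<And>x. x \<in> topspace Y \<Longrightarrow> openin Y (Nb x) \<and> x \<in> Nb x"
  obtains \<V> p where "\<forall>W\<in>\<V>. openin Y W" "topspace Y \<subseteq> \<Union>\<V>"
    "\<forall>x\<in>topspace Y. \<exists>N. openin Y N \<and> x \<in> N \<and> finite {W\<in>\<V>. W \<inter> N \<noteq> {}}"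
    "\<And>W. W \<in> \<V> \<Longrightarrow> p W \<in> topspace Y \<and> W \<subseteq> Nb (p W)"
proof -
  have cover: "\<forall>Q\<in>Nb ` topspace Y. openin Y Q" "topspace Y \<subseteq> \<Union>(Nb ` topspace Y)"
    using Nb by blast+
  obtain \<V> where \<V>: "\<forall>W\<in>\<V>. openin Y W" "topspace Y \<subseteq> \<Union>\<V>"
    "\<forall>W\<in>\<V>. \<exists>Q\<in>Nb ` topspace Y. W \<subseteq> Q"
    "\<forall>x\<in>topspace Y. \<exists>N. openin Y N \<and> x \<in> N \<and> finite {W\<in>\<V>. W \<inter> N \<noteq> {}}"
    using pc[unfolded paracompact_space_def, THEN conjunct2, rule_format, OF conjI[OF cover]]
    by (elim exE conjE)
  have "\<forall>W\<in>\<V>. \<exists>x\<in>topspace Y. W \<subseteq> Nb x" using \<V>(3) by blast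
  then obtain p where "\<And>W. W \<in> \<V> \<Longrightarrow> p W \<in> topspace Y \<and> W \<subseteq> Nb (p W)" by metis
  with \<V>(1,2,4) show ?thesis by (rule that)
qed

lemma locally_finite_cover_by_compact_neighbourhoods:
  assumes G: "lhlc_groupoid X G0 r s iv m" and pc: "paracompact_space (subtopology X G0)"
    and V: "G0 \<subseteq> X interior_of V"
  obtains \<V> C where "\<forall>W\<in>\<V>. openin (subtopology X G0) W" "G0 \<subseteq> \<Union>\<V>"
    "\<forall>x\<in>G0. \<exists>N. openin (subtopology X G0) N \<and> x \<in> N \<and> finite {W\<in>\<V>. W \<inter> N \<noteq> {}}"
    "\<And>W. W \<in> \<V> \<Longrightarrow> compactin X (C W)" "\<And>W. W \<in> \<V> \<Longrightarrow> W \<subseteq> X interior_of (C W)"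
    "\<And>W. W \<in> \<V> \<Longrightarrow> C W \<subseteq> V"
proof -
  have tY: "topspace (subtopology X G0) = G0" using lhlc_units_subset[OF G] by auto
  have "\<forall>u\<in>G0. \<exists>C. compactin X C \<and> u \<in> X interior_of C \<and> C \<subseteq> X interior_of V"
    using compact_neighbourhood_in_open[OF lhlc_locally_compact[OF G] openin_interior_of] V
    by (metis subsetD)
  then obtain D where D: "\<And>u. u \<in> G0 \<Longrightarrow> compactin X (D u) \<and> u \<in> X interior_of (D u) \<and> D u \<subseteq> X interior_of V"
    by metis
  have nbhd: "openin (subtopology X G0) (G0 \<inter> X interior_of D u) \<and> u \<in> G0 \<inter> X interior_of D u"
    if "u \<in> topspace (subtopology X G0)" for u
    using that D tY by (simp add: openin_subtopology_Int2)
  obtain \<V> p where \<V>: "\<forall>W\<in>\<V>. openin (subtopology X G0) W" "topspace (subtopology X G0) \<subseteq> \<Union>\<V>"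
    "\<forall>x\<in>topspace (subtopology X G0). \<exists>N. openin (subtopology X G0) N \<and> x \<in> N \<and>
       finite {W\<in>\<V>. W \<inter> N \<noteq> {}}"
    and p: "\<And>W. W \<in> \<V> \<Longrightarrow>
       p W \<in> topspace (subtopology X G0) \<and> W \<subseteq> G0 \<inter> X interior_of D (p W)"
    using paracompact_locally_finite_refinement[OF pc nbhd] by blast
  show ?thesis
  proof (rule that)
    show "\<forall>W\<in>\<V>. openin (subtopology X G0) W" "G0 \<subseteq> \<Union>\<V>"
      "\<forall>x\<in>G0. \<exists>N. openin (subtopology X G0) N \<and> x \<in> N \<and> finite {W\<in>\<V>. W \<inter> N \<noteq> {}}"
      using \<V> unfolding tY by blast+
    show "compactin X (D (p W))" "W \<subseteq> X interior_of D (p W)" if "W \<in> \<V>" for W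
      using p D that tY by blast+
    show "D (p W) \<subseteq> V" if "W \<in> \<V>" for W
      using p D that tY interior_of_subset[of X V] by blast
  qed
qed

definition arrows_over ::
  "'a topology \<Rightarrow> 'a set \<Rightarrow> ('a \<Rightarrow> 'a) \<Rightarrow> ('a \<Rightarrow> 'a) \<Rightarrow> 'a set \<Rightarrow> 'a set \<Rightarrow> 'a set" where
  "arrows_over X G0 r s C W =
     {a \<in> C. r a \<in> subtopology X G0 closure_of W \<and> s a \<in> subtopology X G0 closure_of W}"

lemma arrows_over_compactin:
  assumes G: "lhlc_groupoid X G0 r s iv m" and C: "compactin X C"
  shows "compactin X (arrows_over X G0 r s C W)"
proof -
  let ?Y = "subtopology X G0"
  have "closedin X ({a \<in> topspace X. r a \<in> ?Y closure_of W} \<inter> {a \<in> topspace X. s a \<in> ?Y closure_of W})"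
    using lhlc_range_source_continuous[OF G]
    by (intro closedin_Int closedin_continuous_map_preimage) auto
  with C have "compactin X (C \<inter> ({a \<in> topspace X. r a \<in> ?Y closure_of W} \<inter> {a \<in> topspace X. s a \<in> ?Y closure_of W}))"
    by (rule compact_Int_closedin)
  moreover have "C \<subseteq> topspace X" using C compactin_subset_topspace by blast
  hence "arrows_over X G0 r s C W
      = C \<inter> ({a \<in> topspace X. r a \<in> ?Y closure_of W} \<inter> {a \<in> topspace X. s a \<in> ?Y closure_of W})"
    unfolding arrows_over_def by blast
  ultimately show ?thesis by simp
qed

text \<open>If an open set W of units lies in the interior of C, it also lies in the interior of the
  arrows of C over W: near a unit u \<in> W, arrows of C have range and source in W.\<close>

lemma units_interior_arrows_over:
  assumes G: "lhlc_groupoid X G0 r s iv m" and W: "openin (subtopology X G0) W"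
    and WC: "W \<subseteq> X interior_of C"
  shows "W \<subseteq> X interior_of (arrows_over X G0 r s C W)"
proof
  fix u assume u: "u \<in> W"
  define N where "N = X interior_of C \<inter> {a \<in> topspace X. r a \<in> W} \<inter> {a \<in> topspace X. s a \<in> W}"
  have "openin X N"
    unfolding N_def using lhlc_range_source_continuous[OF G] W
    by (intro openin_Int openin_continuous_map_preimage openin_interior_of)
  moreover have "u \<in> N"
    using u WC W openin_subset lhlc_range_unit[OF G] unfolding N_def by fastforce
  moreover have "N \<subseteq> arrows_over X G0 r s C W"
    using interior_of_subset[of X C] closure_of_subset[OF openin_subset[OF W]]
    unfolding N_def arrows_over_def by blast
  ultimately show "u \<in> X interior_of (arrows_over X G0 r s C W)"
    using interior_of_maximal_eq by blast
qed

lemma units_interior_Union_arrows_over: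
  assumes G: "lhlc_groupoid X G0 r s iv m"
    and open_cover: "\<forall>W\<in>\<V>. openin (subtopology X G0) W" "G0 \<subseteq> \<Union>\<V>"
    and C: "\<And>W. W \<in> \<V> \<Longrightarrow> W \<subseteq> X interior_of (C W)"
  shows "G0 \<subseteq> X interior_of (\<Union>W\<in>\<V>. arrows_over X G0 r s (C W) W)"
proof
  fix u assume "u \<in> G0"
  then obtain W where W: "W \<in> \<V>" "u \<in> W" using open_cover(2) by blast
  hence "u \<in> X interior_of (arrows_over X G0 r s (C W) W)"
    using units_interior_arrows_over[OF G] open_cover(1) C by blast
  moreover have "arrows_over X G0 r s (C W) W \<subseteq> (\<Union>W\<in>\<V>. arrows_over X G0 r s (C W) W)"
    using W(1) by blast
  ultimately show "u \<in> X interior_of (\<Union>W\<in>\<V>. arrows_over X G0 r s (C W) W)"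
    using interior_of_mono by blast
qed

lemma proper_Union_arrows_over:
  assumes G: "lhlc_groupoid X G0 r s iv m"
    and lf: "\<forall>x\<in>G0. \<exists>N. openin (subtopology X G0) N \<and> x \<in> N \<and> finite {W\<in>\<V>. W \<inter> N \<noteq> {}}"
    and C: "\<And>W. W \<in> \<V> \<Longrightarrow> compactin X (C W)"
  shows "proper_set X (subtopology X G0) r (\<Union>W\<in>\<V>. arrows_over X G0 r s (C W) W)"
    and "proper_set X (subtopology X G0) s (\<Union>W\<in>\<V>. arrows_over X G0 r s (C W) W)"
proof -
  let ?Y = "subtopology X G0" and ?K = "\<lambda>W. arrows_over X G0 r s (C W) W"
  have "\<forall>x\<in>topspace ?Y. \<exists>N. openin ?Y N \<and> x \<in> N \<and> finite {W\<in>\<V>. W \<inter> N \<noteq> {}}"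
    using lf by simp
  moreover have "\<And>W. W \<in> \<V> \<Longrightarrow> compactin X (?K W)" using C arrows_over_compactin[OF G] by blast
  moreover have "\<And>W. r ` ?K W \<subseteq> ?Y closure_of W" "\<And>W. s ` ?K W \<subseteq> ?Y closure_of W"
    unfolding arrows_over_def by blast+
  ultimately show "proper_set X ?Y r (\<Union>(?K ` \<V>))" "proper_set X ?Y s (\<Union>(?K ` \<V>))"
    using lhlc_range_source_continuous[OF G] lhlc_units_Hausdorff[OF G]
    by (blast intro: proper_set_locally_finite_Union)+
qed

theorem mainTheorem4:
  assumes "lhlc_groupoid X G0 r s iv m"
    and "paracompact_space (subtopology X G0)"
    and "V \<subseteq> topspace X" and "G0 \<subseteq> X interior_of V"
  shows "\<exists>U. U \<subseteq> V \<and> G0 \<subseteq> X interior_of U \<and> diagonally_compact X r s m U"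
proof -
  note G = assms(1)
  obtain \<V> C where \<V>_open: "\<forall>W\<in>\<V>. openin (subtopology X G0) W" and \<V>_cover: "G0 \<subseteq> \<Union>\<V>"
    and \<V>_lf: "\<forall>x\<in>G0. \<exists>N. openin (subtopology X G0) N \<and> x \<in> N \<and> finite {W\<in>\<V>. W \<inter> N \<noteq> {}}"
    and C_compact: "\<And>W. W \<in> \<V> \<Longrightarrow> compactin X (C W)"
    and C_nbhd: "\<And>W. W \<in> \<V> \<Longrightarrow> W \<subseteq> X interior_of (C W)"
    and C_sub: "\<And>W. W \<in> \<V> \<Longrightarrow> C W \<subseteq> V"
    using locally_finite_cover_by_compact_neighbourhoods[OF G assms(2,4)] by blast
  define U where "U = (\<Union>W\<in>\<V>. arrows_over X G0 r s (C W) W)"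
  have "U \<subseteq> V" using C_sub unfolding U_def arrows_over_def by blast
  moreover have "G0 \<subseteq> X interior_of U"
    unfolding U_def using units_interior_Union_arrows_over[OF G \<V>_open \<V>_cover C_nbhd] .
  moreover have "proper_set X (subtopology X G0) r U" "proper_set X (subtopology X G0) s U"
    using proper_Union_arrows_over[OF G \<V>_lf C_compact] unfolding U_def by simp_all
  moreover have "U \<subseteq> topspace X" using \<open>U \<subseteq> V\<close> assms(3) by blast
  ultimately show ?thesis using diagonally_compact_if_proper[OF G] by blast
qed

end
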